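(* Let $K\ge 2$, let $\Delta^{K-1}=\{\boldsymbol{p}\in[0,1]^K:\sum_{k=1}^K p_k=1\}$, and let $\boldsymbol{\alpha}=(\alpha_1,\dots,\alpha_K)$ with $\alpha_k>1$ for all $k$ and $\alpha_0=\sum_{k=1}^K\alpha_k$. Let $g(\boldsymbol{p})=\alpha_0^{\alpha_0}\prod_{k=1}^K (p_k/\alpha_k)^{\alpha_k}$ be the Dirichlet possibility function with parameter $\boldsymbol{\alpha}$, so that $\log g(\boldsymbol{p})=\alpha_0\log\alpha_0+\sum_{k=1}^K\alpha_k\log(p_k/\alpha_k)$. Let $\boldsymbol{y}\in\{0,1\}^K$ be a one-hot label vector and let $\ell(\boldsymbol{p},\boldsymbol{y})=-\sum_{k=1}^K y_k\log p_k$ be the cross-entropy loss. Then the maximiser $$\tilde{\boldsymbol{p}}^*=\arg\max_{\boldsymbol{p}\in\Delta^{K-1}}\big[\log g(\boldsymbol{p})+\ell(\boldsymbol{p},\boldsymbol{y})\big]$$ is given by $$\tilde{\boldsymbol{p}}^*=\frac{1}{\alpha_0-1}(\boldsymbol{\alpha}-\boldsymbol{y}).$$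
   Context: In the paper, $\boldsymbol{\alpha}=\Phi'_{\boldsymbol{\psi}}(\boldsymbol{x})$ is the output of a neural network for an input $\boldsymbol{x}$, and $g=g_{\boldsymbol{\psi}}(\cdot\mid\boldsymbol{x})$ is the learned Dirichlet possibility function on the probability simplex; the result concerns only the fixed vector $\boldsymbol{\alpha}$. Convention: $\alpha_k^{\alpha_k}=1$ when $\alpha_k=0$ (not needed here since $\alpha_k>1$). *)

theory Defs
  imports "HOL-Analysis.Analysis"
begin

text \<open>Vectors in R^K are functions nat => real, indexed by {1..K}.\<close>

definition prob_simplex :: "nat \<Rightarrow> (nat \<Rightarrow> real) set" where
  "prob_simplex K = {p. (\<forall>k\<in>{1..K}. 0 \<le> p k \<and> p k \<le> 1) \<and> (\<Sum>k=1..K. p k) = 1}"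

definition alpha0 :: "nat \<Rightarrow> (nat \<Rightarrow> real) \<Rightarrow> real" where
  "alpha0 K \<alpha> = (\<Sum>k=1..K. \<alpha> k)"

definition dir_poss :: "nat \<Rightarrow> (nat \<Rightarrow> real) \<Rightarrow> (nat \<Rightarrow> real) \<Rightarrow> real" where
  "dir_poss K \<alpha> p = alpha0 K \<alpha> powr alpha0 K \<alpha> * (\<Prod>k=1..K. (p k / \<alpha> k) powr \<alpha> k)"

definition cross_entropy :: "nat \<Rightarrow> (nat \<Rightarrow> real) \<Rightarrow> (nat \<Rightarrow> real) \<Rightarrow> real" where
  "cross_entropy K p y = - (\<Sum>k=1..K. y k * ln (p k))"

definition one_hot :: "nat \<Rightarrow> (nat \<Rightarrow> real) \<Rightarrow> bool" where
  "one_hot K y \<longleftrightarrow> (\<forall>k\<in>{1..K}. y k = 0 \<or> y k = 1) \<and> (\<Sum>k=1..K. y k) = 1"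

text \<open>Objective log g(p) + l(p,y); it is finite exactly on the relative interior
  of the simplex (all p_k > 0); on the boundary it equals -infinity.\<close>
definition objective :: "nat \<Rightarrow> (nat \<Rightarrow> real) \<Rightarrow> (nat \<Rightarrow> real) \<Rightarrow> (nat \<Rightarrow> real) \<Rightarrow> real" where
  "objective K \<alpha> y p = ln (dir_poss K \<alpha> p) + cross_entropy K p y"

end

theory Submission
  imports Defs
begin

text \<open>Up to an additive constant, the objective on the open simplex is
  \<open>\<Sum>\<^sub>k (\<alpha>\<^sub>k - y\<^sub>k) ln p\<^sub>k\<close>: the one-hot cross entropy only lowers the exponent of the
  true class by one. Since \<open>\<alpha>\<^sub>k > 1\<close>, these weights are positive and sum to \<open>\<alpha>\<^sub>0 - 1\<close>.
  Gibbs' inequality \<open>\<Sum>\<^sub>k q\<^sub>k ln p\<^sub>k \<le> \<Sum>\<^sub>k q\<^sub>k ln q\<^sub>k\<close> (from \<open>ln x \<le> x - 1\<close>, with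
  equality only at \<open>x = 1\<close>) shows that a positively weighted sum \<open>\<Sum>\<^sub>k b\<^sub>k ln p\<^sub>k\<close> has the
  unique maximiser \<open>b / \<Sum>\<^sub>k b\<^sub>k\<close> on the simplex.\<close>

lemma gibbs_term_nonneg:
  fixes p q :: real
  assumes "q > 0" and "p > 0"
  shows "0 \<le> q * (p / q - 1 - ln (p / q))"
  using assms ln_le_minus_one[of "p / q"] by (intro mult_nonneg_nonneg) auto

lemma gibbs_gap:
  fixes p q :: "'a \<Rightarrow> real"
  assumes "\<forall>k\<in>A. q k > 0" and "\<forall>k\<in>A. p k > 0" and "sum p A = sum q A"
  shows "(\<Sum>k\<in>A. q k * ln (q k)) - (\<Sum>k\<in>A. q k * ln (p k))
    = (\<Sum>k\<in>A. q k * (p k / q k - 1 - ln (p k / q k)))"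
proof -
  have "q k * (p k / q k - 1 - ln (p k / q k)) = p k - q k + (q k * ln (q k) - q k * ln (p k))"
    if "k \<in> A" for k
  proof -
    have "q k > 0" "p k > 0"
      using assms(1,2) that by auto
    then show ?thesis
      by (simp add: ln_div field_simps)
  qed
  then have "(\<Sum>k\<in>A. q k * (p k / q k - 1 - ln (p k / q k)))
      = sum p A - sum q A + ((\<Sum>k\<in>A. q k * ln (q k)) - (\<Sum>k\<in>A. q k * ln (p k)))"
    by (simp add: sum.distrib sum_subtractf)
  with assms(3) show ?thesis
    by simp
qed

lemma gibbs_inequality:
  fixes p q :: "'a \<Rightarrow> real"
  assumes "\<forall>k\<in>A. q k > 0" and "\<forall>k\<in>A. p k > 0" and "sum p A = sum q A"
  shows "(\<Sum>k\<in>A. q k * ln (p k)) \<le> (\<Sum>k\<in>A. q k * ln (q k))"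
proof -
  have "0 \<le> (\<Sum>k\<in>A. q k * (p k / q k - 1 - ln (p k / q k)))"
    using assms(1,2) by (intro sum_nonneg gibbs_term_nonneg) auto
  with gibbs_gap[OF assms] show ?thesis
    by simp
qed

lemma gibbs_inequality_eq_iff:
  fixes p q :: "'a \<Rightarrow> real"
  assumes "finite A" and "\<forall>k\<in>A. q k > 0" and "\<forall>k\<in>A. p k > 0" and "sum p A = sum q A"
  shows "(\<Sum>k\<in>A. q k * ln (p k)) = (\<Sum>k\<in>A. q k * ln (q k)) \<longleftrightarrow> (\<forall>k\<in>A. p k = q k)"
proof
  assume eq: "(\<Sum>k\<in>A. q k * ln (p k)) = (\<Sum>k\<in>A. q k * ln (q k))"
  show "\<forall>k\<in>A. p k = q k"
  proof
    fix k assume k: "k \<in> A"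
    then have "q k > 0" "p k > 0"
      using assms(2,3) by auto
    have terms_nonneg: "0 \<le> q j * (p j / q j - 1 - ln (p j / q j))" if "j \<in> A" for j
      using assms(2,3) that by (auto intro: gibbs_term_nonneg)
    have "(\<Sum>j\<in>A. q j * (p j / q j - 1 - ln (p j / q j))) = 0"
      using gibbs_gap[OF assms(2-4)] eq by simp
    then have "\<forall>j\<in>A. q j * (p j / q j - 1 - ln (p j / q j)) = 0"
      by (simp only: sum_nonneg_eq_0_iff[OF assms(1) terms_nonneg])
    then have "q k * (p k / q k - 1 - ln (p k / q k)) = 0"
      using k by blast
    then have "ln (p k / q k) = p k / q k - 1"
      using \<open>q k > 0\<close> by simp
    then have "p k / q k = 1"
      using \<open>q k > 0\<close> \<open>p k > 0\<close> by (intro ln_eq_minus_one) auto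
    then show "p k = q k"
      using \<open>q k > 0\<close> by simp
  qed
qed simp

lemma weighted_gibbs_inequality:
  fixes b p :: "'a \<Rightarrow> real"
  assumes "finite A" and "\<forall>k\<in>A. b k > 0" and "\<forall>k\<in>A. p k > 0" and "sum p A = 1"
  shows "(\<Sum>k\<in>A. b k * ln (p k)) \<le> (\<Sum>k\<in>A. b k * ln (b k / sum b A))"
    and "(\<Sum>k\<in>A. b k * ln (p k)) = (\<Sum>k\<in>A. b k * ln (b k / sum b A))
      \<longleftrightarrow> (\<forall>k\<in>A. p k = b k / sum b A)"
proof -
  define q where "q k = b k / sum b A" for k
  have "A \<noteq> {}"
    using assms(4) by auto
  then have "sum b A > 0"
    using assms(1,2) by (intro sum_pos) auto
  then have q_pos: "\<forall>k\<in>A. q k > 0" and sums: "sum p A = sum q A"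
    using assms(2,4) by (auto simp: q_def simp flip: sum_divide_distrib)
  have scale: "(\<Sum>k\<in>A. b k * ln (f k)) = sum b A * (\<Sum>k\<in>A. q k * ln (f k))" for f
    using \<open>sum b A > 0\<close> by (simp add: q_def sum_distrib_left)
  show "(\<Sum>k\<in>A. b k * ln (p k)) \<le> (\<Sum>k\<in>A. b k * ln (b k / sum b A))"
    using gibbs_inequality[OF q_pos assms(3) sums] \<open>sum b A > 0\<close>
    unfolding q_def[symmetric] scale by simp
  show "(\<Sum>k\<in>A. b k * ln (p k)) = (\<Sum>k\<in>A. b k * ln (b k / sum b A))
      \<longleftrightarrow> (\<forall>k\<in>A. p k = b k / sum b A)"
    using gibbs_inequality_eq_iff[OF assms(1) q_pos assms(3) sums] \<open>sum b A > 0\<close>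
    unfolding q_def[symmetric] scale by simp
qed

lemma prob_simplex_iff:
  "p \<in> prob_simplex K \<longleftrightarrow> (\<forall>k\<in>{1..K}. 0 \<le> p k) \<and> (\<Sum>k=1..K. p k) = 1"
proof -
  have "p k \<le> 1" if "\<forall>k\<in>{1..K}. 0 \<le> p k" "(\<Sum>k=1..K. p k) = 1" "k \<in> {1..K}" for k
    using member_le_sum[of k "{1..K}" p] that by simp
  then show ?thesis
    unfolding prob_simplex_def by blast
qed

lemma normalized_in_prob_simplex:
  assumes "K > 0" and "\<forall>k\<in>{1..K}. b k > 0"
  shows "(\<lambda>k. b k / (\<Sum>j=1..K. b j)) \<in> prob_simplex K"
    and "\<forall>k\<in>{1..K}. b k / (\<Sum>j=1..K. b j) > 0"
proof -
  have "(\<Sum>j=1..K. b j) > 0"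
    using assms by (intro sum_pos) auto
  then show "\<forall>k\<in>{1..K}. b k / (\<Sum>j=1..K. b j) > 0"
    using assms(2) by simp
  with \<open>(\<Sum>j=1..K. b j) > 0\<close> show "(\<lambda>k. b k / (\<Sum>j=1..K. b j)) \<in> prob_simplex K"
    by (simp add: prob_simplex_iff less_imp_le flip: sum_divide_distrib)
qed

lemma ln_dir_poss:
  assumes "K > 0" and "\<forall>k\<in>{1..K}. \<alpha> k > 0" and "\<forall>k\<in>{1..K}. p k > 0"
  shows "ln (dir_poss K \<alpha> p) = alpha0 K \<alpha> * ln (alpha0 K \<alpha>) + (\<Sum>k=1..K. \<alpha> k * ln (p k / \<alpha> k))"
proof -
  have "alpha0 K \<alpha> > 0"
    unfolding alpha0_def using assms(1,2) by (intro sum_pos) auto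
  moreover have factors_pos: "(p k / \<alpha> k) powr \<alpha> k > 0" if "k \<in> {1..K}" for k
    using assms(2,3) that by force
  ultimately have "ln (dir_poss K \<alpha> p)
      = ln (alpha0 K \<alpha> powr alpha0 K \<alpha>) + ln (\<Prod>k=1..K. (p k / \<alpha> k) powr \<alpha> k)"
    unfolding dir_poss_def by (intro ln_mult_pos prod_pos) auto
  also have "\<dots> = alpha0 K \<alpha> * ln (alpha0 K \<alpha>) + (\<Sum>k=1..K. \<alpha> k * ln (p k / \<alpha> k))"
    using factors_pos by (subst ln_prod) fastforce+
  finally show ?thesis .
qed

lemma objective_eq:
  assumes "K > 0" and "\<forall>k\<in>{1..K}. \<alpha> k > 0" and "\<forall>k\<in>{1..K}. p k > 0"
  shows "objective K \<alpha> y p = alpha0 K \<alpha> * ln (alpha0 K \<alpha>) - (\<Sum>k=1..K. \<alpha> k * ln (\<alpha> k))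
    + (\<Sum>k=1..K. (\<alpha> k - y k) * ln (p k))"
proof -
  have "(\<Sum>k=1..K. \<alpha> k * ln (p k / \<alpha> k)) = (\<Sum>k=1..K. \<alpha> k * ln (p k) - \<alpha> k * ln (\<alpha> k))"
    using assms(2,3) by (intro sum.cong) (force simp: ln_div right_diff_distrib)+
  then show ?thesis
    unfolding objective_def cross_entropy_def ln_dir_poss[OF assms]
    by (simp add: sum_subtractf left_diff_distrib)
qed

lemma one_hot_le_one: "one_hot K y \<Longrightarrow> k \<in> {1..K} \<Longrightarrow> y k \<le> 1"
  unfolding one_hot_def by force

lemma sum_diff_one_hot: "one_hot K y \<Longrightarrow> (\<Sum>k=1..K. \<alpha> k - y k) = alpha0 K \<alpha> - 1"
  unfolding one_hot_def alpha0_def by (simp add: sum_subtractf)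

theorem proposition1:
  fixes K :: nat and \<alpha> y :: "nat \<Rightarrow> real"
  assumes "K \<ge> 2"
    and "\<forall>k\<in>{1..K}. \<alpha> k > 1"
    and "one_hot K y"
  defines "pt \<equiv> (\<lambda>k. (\<alpha> k - y k) / (alpha0 K \<alpha> - 1))"
  shows "pt \<in> prob_simplex K \<and> (\<forall>k\<in>{1..K}. pt k > 0)
    \<and> (\<forall>p\<in>prob_simplex K. (\<forall>k\<in>{1..K}. p k > 0) \<longrightarrow>
          objective K \<alpha> y p \<le> objective K \<alpha> y pt
          \<and> (objective K \<alpha> y p = objective K \<alpha> y pt \<longrightarrow> (\<forall>k\<in>{1..K}. p k = pt k)))"
proof -
  let ?b = "\<lambda>k. \<alpha> k - y k"
  have K_pos: "K > 0" and \<alpha>_pos: "\<forall>k\<in>{1..K}. \<alpha> k > 0"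
    using assms(1,2) by auto
  have weights_pos: "\<forall>k\<in>{1..K}. ?b k > 0"
    using assms(2) one_hot_le_one[OF assms(3)] by force
  have pt_eq: "pt = (\<lambda>k. ?b k / (\<Sum>j=1..K. ?b j))"
    unfolding pt_def sum_diff_one_hot[OF assms(3)] ..
  have pt_simplex: "pt \<in> prob_simplex K" and pt_pos: "\<forall>k\<in>{1..K}. pt k > 0"
    unfolding pt_eq using normalized_in_prob_simplex[OF K_pos weights_pos] by simp_all
  have "objective K \<alpha> y p \<le> objective K \<alpha> y pt
      \<and> (objective K \<alpha> y p = objective K \<alpha> y pt \<longrightarrow> (\<forall>k\<in>{1..K}. p k = pt k))"
    if "p \<in> prob_simplex K" and p_pos: "\<forall>k\<in>{1..K}. p k > 0" for p
  proof -
    have "sum p {1..K} = 1"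
      using that(1) by (simp add: prob_simplex_iff)
    from weighted_gibbs_inequality[OF _ weights_pos p_pos this] show ?thesis
      unfolding objective_eq[OF K_pos \<alpha>_pos p_pos] objective_eq[OF K_pos \<alpha>_pos pt_pos]
      by (simp add: pt_eq)
  qed
  with pt_simplex pt_pos show ?thesis
    by blast
qed

end
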